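(* The unitary $U_4=(T_{AB}\otimes I_2)(I_2\otimes T_{BC})$ on $\mathbb{C}^2\otimes\mathbb{C}^2\otimes\mathbb{C}^2$ has $\mathrm{sr}(U_4)=4$.
   Context: $I_2$ is the $2\times 2$ identity, $\sigma_1=\begin{bmatrix}0&1\\1&0\end{bmatrix}$. $T=|0\rangle\langle0|\otimes I_2+|1\rangle\langle1|\otimes\sigma_1$ is the CNOT gate; $T_{AB}$ denotes $T$ with control qubit $A$ and target $B$, $T_{BC}$ with control $B$ and target $C$. For a matrix $U$ on $\mathbb{C}^2\otimes\mathbb{C}^2\otimes\mathbb{C}^2$ (systems $A,B,C$), its Schmidt rank $\mathrm{sr}(U)$ is the least integer $r$ such that $U=\sum_{j=1}^r A_j\otimes B_j\otimes C_j$ with $A_j,B_j,C_j$ complex $2\times 2$ matrices (i.e. the tensor rank of $U$). *)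

theory Defs
  imports Complex_Main
begin

text \<open>Qubit basis indices: False = |0>, True = |1>.
  A 2x2 matrix is a function bool => bool => complex (row, column);
  an operator on C^2 (x) C^2 (x) C^2 (systems A,B,C) is indexed by triples.\<close>

type_synonym qmat1 = "bool \<Rightarrow> bool \<Rightarrow> complex"
type_synonym qmat2 = "bool \<times> bool \<Rightarrow> bool \<times> bool \<Rightarrow> complex"
type_synonym qmat3 = "bool \<times> bool \<times> bool \<Rightarrow> bool \<times> bool \<times> bool \<Rightarrow> complex"

definition I2 :: qmat1 where "I2 i j = (if i = j then 1 else 0)"
definition sigma1 :: qmat1 where "sigma1 i j = (if i \<noteq> j then 1 else 0)"
definition proj0 :: qmat1 where "proj0 i j = (if i = False \<and> j = False then 1 else 0)"
definition proj1 :: qmat1 where "proj1 i j = (if i = True \<and> j = True then 1 else 0)"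

definition kron2 :: "qmat1 \<Rightarrow> qmat1 \<Rightarrow> qmat2" where
  "kron2 A B = (\<lambda>(a, b) (a', b'). A a a' * B b b')"

definition kron3 :: "qmat1 \<Rightarrow> qmat1 \<Rightarrow> qmat1 \<Rightarrow> qmat3" where
  "kron3 A B C = (\<lambda>(a, b, c) (a', b', c'). A a a' * B b b' * C c c')"

definition kron_2_1 :: "qmat2 \<Rightarrow> qmat1 \<Rightarrow> qmat3" where
  "kron_2_1 M C = (\<lambda>(a, b, c) (a', b', c'). M (a, b) (a', b') * C c c')"
definition kron_1_2 :: "qmat1 \<Rightarrow> qmat2 \<Rightarrow> qmat3" where
  "kron_1_2 A M = (\<lambda>(a, b, c) (a', b', c'). A a a' * M (b, c) (b', c'))"

definition matmul3 :: "qmat3 \<Rightarrow> qmat3 \<Rightarrow> qmat3" where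
  "matmul3 M N = (\<lambda>i j. \<Sum>k\<in>UNIV. M i k * N k j)"

definition CNOT :: qmat2 where
  "CNOT = (\<lambda>i j. kron2 proj0 I2 i j + kron2 proj1 sigma1 i j)"

definition U4 :: qmat3 where
  "U4 = matmul3 (kron_2_1 CNOT I2) (kron_1_2 I2 CNOT)"

definition schmidt_rank :: "qmat3 \<Rightarrow> nat" where
  "schmidt_rank U = (LEAST r. \<exists>A B C :: nat \<Rightarrow> qmat1.
      U = (\<lambda>i j. \<Sum>k<r. kron3 (A k) (B k) (C k) i j))"

end

theory Submission
  imports Defs "HOL-Analysis.Analysis"
begin

text \<open>U4 is the permutation matrix of the basis map (a, b, c) \<mapsto> (a, a \<oplus> b, b \<oplus> c); an explicit sum of
  four product operators shows sr(U4) \<le> 4. Conversely, fix the C-input to 0 and the A-output equal to the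
  A-input: the remaining entries, arranged as a 4 \<times> 4 matrix with rows (a, c') and columns (b, b'), form a
  permutation matrix, while every term of a product decomposition contributes a rank-one matrix. A sum of fewer
  than four rank-one 4 \<times> 4 matrices has determinant 0, so sr(U4) \<ge> 4.\<close>

lemma det_sum_outer_products_eq_0:
  fixes u v :: "nat \<Rightarrow> 'a::field^'n"
  assumes "r < CARD('n)"
  shows "det (\<chi> i j. \<Sum>k<r. u k $ i * v k $ j) = 0"
proof -
  obtain g :: "'n \<Rightarrow> nat" where g: "bij_betw g UNIV {..<CARD('n)}"
    using ex_bij_betw_finite_nat[of "UNIV :: 'n set"] by (auto simp: atLeast0LessThan)
  define \<alpha> :: "'a^'n^'n" where "\<alpha> = (\<chi> i t. if g t < r then u (g t) $ i else 0)"
  define \<beta> :: "'a^'n^'n" where "\<beta> = (\<chi> t j. if g t < r then v (g t) $ j else 0)"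
  have "(\<alpha> ** \<beta>) $ i $ j = (\<Sum>k<r. u k $ i * v k $ j)" for i j
  proof -
    have "(\<alpha> ** \<beta>) $ i $ j = (\<Sum>t\<in>UNIV. if g t < r then u (g t) $ i * v (g t) $ j else 0)"
      by (simp add: matrix_matrix_mult_def \<alpha>_def \<beta>_def if_distrib cong: if_cong)
    also have "\<dots> = (\<Sum>k<CARD('n). if k < r then u k $ i * v k $ j else 0)"
      using sum.reindex_bij_betw[OF g, of "\<lambda>k. if k < r then u k $ i * v k $ j else 0"] by simp
    also have "\<dots> = (\<Sum>k<r. u k $ i * v k $ j)"
      using assms by (simp add: sum.If_cases Int_absorb1 flip: lessThan_def)
    finally show ?thesis .
  qed
  then have "(\<chi> i j. \<Sum>k<r. u k $ i * v k $ j) = \<alpha> ** \<beta>"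
    by (simp add: vec_eq_iff)
  moreover obtain t where "g t = r"
    using g assms by (metis bij_betw_iff_bijections lessThan_iff)
  then have "det \<alpha> = 0"
    by (intro det_zero_column(2)[of t]) (simp add: column_def \<alpha>_def vec_eq_iff)
  ultimately show ?thesis by (simp add: det_mul)
qed

lemma sum_UNIV_bool3:
  "(\<Sum>k\<in>UNIV. f k) = (\<Sum>a\<in>UNIV. \<Sum>b\<in>UNIV. \<Sum>c\<in>UNIV. f (a, b, c :: bool))"
  by (simp add: UNIV_Times_UNIV[symmetric] sum.cartesian_product del: UNIV_Times_UNIV)

lemma U4_apply:
  "U4 (a, b, c) (a', b', c') = (if a = a' \<and> b = (a' \<noteq> b') \<and> c = (b' \<noteq> c') then 1 else 0)"
  unfolding U4_def matmul3_def sum_UNIV_bool3 kron_2_1_def kron_1_2_def CNOT_def kron2_def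
    I2_def sigma1_def proj0_def proj1_def
  by (cases a; cases b; cases c; cases a'; cases b'; cases c') (simp_all add: UNIV_bool)

definition ketbra :: "bool \<Rightarrow> bool \<Rightarrow> qmat1" where
  "ketbra i j = (\<lambda>x y. if x = i \<and> y = j then 1 else 0)"

lemma U4_decomposition:
  "U4 = (\<lambda>i j. \<Sum>k<4. kron3 ([ketbra False False, ketbra False False, ketbra True True, ketbra True True] ! k)
                             ([ketbra False False, ketbra True True, ketbra True False, ketbra False True] ! k)
                             ([I2, sigma1, I2, sigma1] ! k) i j)"
  (is "_ = (\<lambda>i j. ?sum i j)")
proof (intro ext)
  fix i j :: "bool \<times> bool \<times> bool"
  obtain a b c a' b' c' where "i = (a, b, c)" "j = (a', b', c')" by (metis prod.exhaust)
  moreover have "U4 (a, b, c) (a', b', c') = ?sum (a, b, c) (a', b', c')"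
    unfolding U4_apply by (cases a; cases b; cases c; cases a'; cases b'; cases c')
      (simp_all add: eval_nat_numeral kron3_def ketbra_def I2_def sigma1_def)
  ultimately show "U4 i j = ?sum i j" by simp
qed

text \<open>Rows are indexed by (a, c'), columns by (p, q) standing for (b, b') = (p \<oplus> q, q); this relabelling
  of the columns makes the slice of U4 the identity.\<close>
definition slice :: "qmat3 \<Rightarrow> complex^(bool \<times> bool)^(bool \<times> bool)" where
  "slice U = (\<chi> i j. U (fst i, fst j \<noteq> snd j, False) (fst i, snd j, snd i))"

lemma slice_U4: "slice U4 = mat 1"
  by (simp add: slice_def mat_def vec_eq_iff U4_apply prod_eq_iff)

lemma det_slice_eq_0:
  fixes A B C :: "nat \<Rightarrow> qmat1"
  assumes "r < 4" and "U = (\<lambda>i j. \<Sum>k<r. kron3 (A k) (B k) (C k) i j)"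
  shows "det (slice U) = 0"
proof -
  define u :: "nat \<Rightarrow> complex^(bool \<times> bool)"
    where "u k = (\<chi> i. A k (fst i) (fst i) * C k False (snd i))" for k
  define v :: "nat \<Rightarrow> complex^(bool \<times> bool)"
    where "v k = (\<chi> j. B k (fst j \<noteq> snd j) (snd j))" for k
  have "slice U $ i $ j = (\<Sum>k<r. u k $ i * v k $ j)" for i j
    unfolding slice_def assms(2) u_def v_def kron3_def by (simp add: mult_ac)
  then have "slice U = (\<chi> i j. \<Sum>k<r. u k $ i * v k $ j)"
    by (simp add: vec_eq_iff)
  moreover have "r < CARD(bool \<times> bool)"
    using assms(1) by simp
  ultimately show ?thesis
    by (simp only: det_sum_outer_products_eq_0)
qed

theorem mainTheorem14:
  shows "schmidt_rank U4 = 4"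
  unfolding schmidt_rank_def
proof (rule Least_equality)
  show "\<exists>A B C :: nat \<Rightarrow> qmat1. U4 = (\<lambda>i j. \<Sum>k<4. kron3 (A k) (B k) (C k) i j)"
    using U4_decomposition by blast
next
  fix r
  assume "\<exists>A B C :: nat \<Rightarrow> qmat1. U4 = (\<lambda>i j. \<Sum>k<r. kron3 (A k) (B k) (C k) i j)"
  then have "r < 4 \<Longrightarrow> det (slice U4) = 0"
    using det_slice_eq_0 by blast
  then show "4 \<le> r"
    by (fastforce simp: slice_U4)
qed

end
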